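(* Let $x,y>0$ with $x\ne y$, and define for $t\in(-\min\{x,y\},\infty)$ \[ G_{x,y}(t)=G(x+t,y+t)=\sqrt{(x+t)(y+t)}\,. \] Then $G_{x,y}(t)$ is a Bernstein function of $t$ on $(-\min\{x,y\},\infty)$.
   Context: For positive numbers $a,b$, the geometric mean is $G(a,b)=\sqrt{ab}$. A function $f$ on an interval $I\subseteq\mathbb{R}$ is completely monotonic on $I$ if it has derivatives of all orders on $I$ and $(-1)^n f^{(n)}(t)\ge 0$ for all $t\in I$ and all integers $n\ge0$. A function $f:I\to[0,\infty)$ is a Bernstein function on $I$ if it has derivatives of all orders and $f'$ is completely monotonic on $I$. *)

theory Defs
  imports "HOL-Analysis.Analysis"
begin

definition nth_deriv :: "nat \<Rightarrow> (real \<Rightarrow> real) \<Rightarrow> real \<Rightarrow> real" where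
  "nth_deriv n f = (deriv ^^ n) f"

definition smooth_on :: "real set \<Rightarrow> (real \<Rightarrow> real) \<Rightarrow> bool" where
  "smooth_on I f \<longleftrightarrow> (\<forall>n. \<forall>t\<in>I. nth_deriv n f differentiable (at t))"

definition completely_monotonic_on :: "real set \<Rightarrow> (real \<Rightarrow> real) \<Rightarrow> bool" where
  "completely_monotonic_on I f \<longleftrightarrow>
     smooth_on I f \<and> (\<forall>n. \<forall>t\<in>I. (-1) ^ n * nth_deriv n f t \<ge> 0)"

definition bernstein_on :: "real set \<Rightarrow> (real \<Rightarrow> real) \<Rightarrow> bool" where
  "bernstein_on I f \<longleftrightarrow>
     (\<forall>t\<in>I. f t \<ge> 0) \<and> smooth_on I f \<and> completely_monotonic_on I (deriv f)"

end

theory Submission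
  imports Defs
begin

text \<open>
  Write \<open>u = x + t\<close>, \<open>v = y + t\<close>. Every derivative of \<open>G = u powr (1/2) * v powr (1/2)\<close>
  is a finite sum of terms \<open>c * u powr p * v powr q\<close>, and differentiating such a sum is a
  symbolic operation on the list of triples \<open>(c, p, q)\<close>. Here
  \<open>G' = (u powr (-1/2) * v powr (1/2) + u powr (1/2) * v powr (-1/2)) / 2 \<ge> 0\<close> and
  \<open>G'' = - (x - y)\<^sup>2 / 4 * u powr (-3/2) * v powr (-3/2)\<close>. When all exponents are \<open>\<le> 0\<close>,
  differentiation keeps them \<open>\<le> 0\<close> and flips the sign of every coefficient, so the
  derivatives of \<open>G''\<close> alternate in sign: \<open>G'\<close> is completely monotonic.
\<close>

type_synonym monomial = "real \<times> real \<times> real"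

fun eval_monomials :: "real \<Rightarrow> real \<Rightarrow> monomial list \<Rightarrow> real \<Rightarrow> real" where
  "eval_monomials a b [] t = 0"
| "eval_monomials a b ((c, p, q) # ms) t =
     c * (a + t) powr p * (b + t) powr q + eval_monomials a b ms t"

fun diff_monomials :: "monomial list \<Rightarrow> monomial list" where
  "diff_monomials [] = []"
| "diff_monomials ((c, p, q) # ms) = (c * p, p - 1, q) # (c * q, p, q - 1) # diff_monomials ms"

definition signed_monomials :: "real \<Rightarrow> monomial list \<Rightarrow> bool" where
  "signed_monomials s ms \<longleftrightarrow> (\<forall>(c, p, q) \<in> set ms. p \<le> 0 \<and> q \<le> 0 \<and> 0 \<le> s * c)"

lemma has_real_derivative_eval_monomials:
  assumes "0 < a + t" "0 < b + t"
  shows "(eval_monomials a b ms has_real_derivative eval_monomials a b (diff_monomials ms) t) (at t)"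
proof (induction ms)
  case Nil
  then show ?case by simp
next
  case (Cons m ms)
  obtain c p q where m: "m = (c, p, q)" by (cases m) auto
  have "((\<lambda>t. (a + t) powr p) has_real_derivative p * (a + t) powr (p - 1)) (at t)"
    "((\<lambda>t. (b + t) powr q) has_real_derivative q * (b + t) powr (q - 1)) (at t)"
    using assms by (auto intro!: derivative_eq_intros)
  from DERIV_add[OF DERIV_mult[OF DERIV_cmult[OF this(1), of c] this(2)] Cons.IH]
  show ?case by (simp add: m algebra_simps)
qed

lemma nth_deriv_Suc: "nth_deriv (Suc n) f = nth_deriv n (deriv f)"
  unfolding nth_deriv_def by (simp add: funpow_Suc_right del: funpow.simps)

lemma signed_monomials_diff:
  "signed_monomials s ms \<Longrightarrow> signed_monomials (- s) (diff_monomials ms)"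
proof (induction ms)
  case Nil
  then show ?case by (simp add: signed_monomials_def)
next
  case (Cons m ms)
  obtain c p q where m: "m = (c, p, q)" by (cases m) auto
  with Cons.prems have "p \<le> 0" "q \<le> 0" "0 \<le> s * c" "signed_monomials s ms"
    by (auto simp: signed_monomials_def)
  moreover from this have "0 \<le> - s * (c * p)" "0 \<le> - s * (c * q)"
    using mult_nonneg_nonneg[of "s * c" "- p"] mult_nonneg_nonneg[of "s * c" "- q"]
    by (simp_all add: algebra_simps)
  ultimately show ?case using Cons.IH by (auto simp: signed_monomials_def m)
qed

lemma signed_monomials_funpow_diff:
  "signed_monomials s ms \<Longrightarrow> signed_monomials ((- 1) ^ n * s) ((diff_monomials ^^ n) ms)"
  by (induction n) (auto dest: signed_monomials_diff)

lemma eval_monomials_sign: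
  assumes "\<forall>(c, p, q) \<in> set ms. 0 \<le> s * c"
  shows "0 \<le> s * eval_monomials a b ms t"
  using assms
proof (induction ms)
  case Nil
  then show ?case by simp
next
  case (Cons m ms)
  obtain c p q where m: "m = (c, p, q)" by (cases m) auto
  with Cons.prems have "0 \<le> s * c * ((a + t) powr p * (b + t) powr q)" by auto
  with Cons show ?case by (simp add: m algebra_simps)
qed

context
  fixes S :: "real set" and a b :: real
  assumes open_S: "open S" and S_pos: "\<And>t. t \<in> S \<Longrightarrow> 0 < a + t \<and> 0 < b + t"
begin

lemma deriv_eq_eval_diff_monomials:
  assumes "\<forall>t\<in>S. f t = eval_monomials a b ms t"
  shows "\<forall>t\<in>S. deriv f t = eval_monomials a b (diff_monomials ms) t"
proof
  fix t assume t: "t \<in> S"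
  have "(eval_monomials a b ms has_real_derivative eval_monomials a b (diff_monomials ms) t) (at t)"
    using S_pos[OF t] by (intro has_real_derivative_eval_monomials) auto
  then have "(f has_real_derivative eval_monomials a b (diff_monomials ms) t) (at t)"
    by (rule has_field_derivative_transform_within_open[OF _ open_S t]) (use assms in auto)
  then show "deriv f t = eval_monomials a b (diff_monomials ms) t"
    by (rule DERIV_imp_deriv)
qed

lemma nth_deriv_eq_eval_monomials:
  assumes "\<forall>t\<in>S. f t = eval_monomials a b ms t"
  shows "\<forall>t\<in>S. nth_deriv n f t = eval_monomials a b ((diff_monomials ^^ n) ms) t"
  using assms
proof (induction n arbitrary: f ms)
  case 0
  then show ?case by (simp add: nth_deriv_def)
next
  case (Suc n)
  from Suc.IH[OF deriv_eq_eval_diff_monomials[OF Suc.prems]] show ?case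
    by (simp add: nth_deriv_Suc funpow_Suc_right del: funpow.simps)
qed

lemma smooth_on_eval_monomials:
  assumes "\<forall>t\<in>S. f t = eval_monomials a b ms t"
  shows "smooth_on S f"
  unfolding smooth_on_def
proof (intro allI ballI)
  fix n t assume t: "t \<in> S"
  have "(eval_monomials a b ((diff_monomials ^^ n) ms) has_real_derivative
      eval_monomials a b (diff_monomials ((diff_monomials ^^ n) ms)) t) (at t)"
    using S_pos[OF t] by (intro has_real_derivative_eval_monomials) auto
  then have "(nth_deriv n f has_real_derivative
      eval_monomials a b (diff_monomials ((diff_monomials ^^ n) ms)) t) (at t)"
    by (rule has_field_derivative_transform_within_open[OF _ open_S t])
       (use nth_deriv_eq_eval_monomials[OF assms] in auto)
  then show "nth_deriv n f differentiable (at t)"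
    using real_differentiable_def by blast
qed

lemma alternating_sign_nth_deriv_monomials:
  assumes "\<forall>t\<in>S. f t = eval_monomials a b ms t" and "signed_monomials s ms" and "t \<in> S"
  shows "0 \<le> (- 1) ^ n * s * nth_deriv n f t"
proof -
  have "nth_deriv n f t = eval_monomials a b ((diff_monomials ^^ n) ms) t"
    using nth_deriv_eq_eval_monomials[OF assms(1)] assms(3) by blast
  moreover have "signed_monomials ((- 1) ^ n * s) ((diff_monomials ^^ n) ms)"
    using signed_monomials_funpow_diff[OF assms(2)] .
  ultimately show ?thesis
    by (simp add: signed_monomials_def eval_monomials_sign case_prod_unfold)
qed

end

lemma powr_eq_powr_mult_power:
  fixes u :: real
  assumes "0 < u"
  shows "u powr (1/2) = u powr (-3/2) * u\<^sup>2" and "u powr (-1/2) = u powr (-3/2) * u"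
proof -
  have "u powr (1/2) = u powr (-3/2 + 2)" by simp
  also have "\<dots> = u powr (-3/2) * u\<^sup>2" using assms by (simp only: powr_add powr_numeral)
  finally show "u powr (1/2) = u powr (-3/2) * u\<^sup>2" .
  have "u powr (-1/2) = u powr (-3/2 + 1)" by simp
  also have "\<dots> = u powr (-3/2) * u" using assms by (subst powr_add) simp
  finally show "u powr (-1/2) = u powr (-3/2) * u" .
qed

lemma eval_monomials_second_diff_sqrt:
  assumes "0 < x + t" "0 < y + t"
  shows "eval_monomials x y ((diff_monomials ^^ 2) [(1, 1/2, 1/2)]) t
       = eval_monomials x y [(- (x - y)\<^sup>2 / 4, -3/2, -3/2)] t"
proof -
  define A where "A = (x + t) powr (-3/2)"
  define B where "B = (y + t) powr (-3/2)"
  have diff2: "(diff_monomials ^^ 2) [(1, 1/2, 1/2)]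
      = [(-1/4, -3/2, 1/2), (1/4, -1/2, -1/2), (1/4, -1/2, -1/2), (-1/4, 1/2, -3/2)]"
    by (simp add: numeral_2_eq_2)
  have "eval_monomials x y ((diff_monomials ^^ 2) [(1, 1/2, 1/2)]) t
      = - 1/4 * A * (B * (y + t)\<^sup>2) + 1/4 * (A * (x + t)) * (B * (y + t))
        + (1/4 * (A * (x + t)) * (B * (y + t)) + (- 1/4 * (A * (x + t)\<^sup>2) * B + 0))"
    unfolding diff2 eval_monomials.simps A_def B_def
      powr_eq_powr_mult_power[OF assms(1)] powr_eq_powr_mult_power[OF assms(2)]
    by simp
  also have "\<dots> = - (x - y)\<^sup>2 / 4 * A * B"
    by (simp add: power2_eq_square algebra_simps)
  finally show ?thesis by (simp add: A_def B_def)
qed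

theorem theorem4p1:
  fixes x y :: real
  assumes "x > 0" and "y > 0" and "x \<noteq> y"
  shows "bernstein_on {- min x y<..} (\<lambda>t. sqrt ((x + t) * (y + t)))"
proof -
  define S where "S = {- min x y<..}"
  define G where "G = (\<lambda>t. sqrt ((x + t) * (y + t)))"
  have S: "open S" "\<And>t. t \<in> S \<Longrightarrow> 0 < x + t \<and> 0 < y + t" by (auto simp: S_def)
  have G: "\<forall>t\<in>S. G t = eval_monomials x y [(1, 1/2, 1/2)] t"
    using S(2) by (simp add: G_def powr_half_sqrt less_imp_le real_sqrt_mult)
  note G' = deriv_eq_eval_diff_monomials[OF S G]
  have G'': "\<forall>t\<in>S. deriv (deriv G) t = eval_monomials x y [(- (x - y)\<^sup>2 / 4, -3/2, -3/2)] t"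
  proof
    fix t assume "t \<in> S"
    with deriv_eq_eval_diff_monomials[OF S G'] have "deriv (deriv G) t
        = eval_monomials x y ((diff_monomials ^^ 2) [(1, 1/2, 1/2)]) t"
      by (simp add: numeral_2_eq_2)
    with \<open>t \<in> S\<close> S(2) show "deriv (deriv G) t = eval_monomials x y [(- (x - y)\<^sup>2 / 4, -3/2, -3/2)] t"
      by (simp only: eval_monomials_second_diff_sqrt)
  qed
  have "0 \<le> (- 1) ^ n * nth_deriv n (deriv G) t" if "t \<in> S" for n t
  proof (cases n)
    case 0
    then show ?thesis
      using G' that eval_monomials_sign[of "diff_monomials [(1, 1/2, 1/2)]" 1]
      by (simp add: nth_deriv_def)
  next
    case (Suc m)
    have "signed_monomials (- 1) [(- (x - y)\<^sup>2 / 4, -3/2, -3/2)]"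
      by (simp add: signed_monomials_def)
    from alternating_sign_nth_deriv_monomials[OF S G'' this that, of m] Suc show ?thesis
      by (simp add: nth_deriv_Suc)
  qed
  moreover have "smooth_on S G" "smooth_on S (deriv G)"
    using smooth_on_eval_monomials[OF S] G G' by blast+
  moreover have "\<forall>t\<in>S. 0 \<le> G t" by (simp add: G_def S_def)
  ultimately show ?thesis
    unfolding bernstein_on_def completely_monotonic_on_def S_def G_def by blast
qed

end
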